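(* Let $E\subset\mathbb{Q}_p$ be a $p$-homogeneous discrete set. Then there exists an isometry $f:\mathbb{Q}_p\to\mathbb{Q}_p$ (with respect to $|\cdot|_p$) such that $$f(E)=\widehat E:=\Big\{\sum_{i\in I_E}\beta_ip^i:\ \beta_i\in\{0,1,\dots,p-1\},\ \text{only finitely many }\beta_i\neq0\Big\}.$$
   Context: $p\ge2$ is a prime, $v_p$ is the $p$-adic valuation and $|x|_p=p^{-v_p(x)}$. Balls are $B(a,p^{-n})=a+p^n\mathbb{Z}_p$. Admissible $p$-orders: $I_E=\{v_p(x-y):x,y\in E,\ x\ne y\}$ and $I_E^{\ge n}=\{i\in I_E:i\ge n\}$. $p$-homogeneous discrete set: $E$ with $I_E$ bounded above is $p$-homogeneous if $\sharp(E\cap B(a,p^{-n}))\in\{0,\ p^{\sharp I_E^{\ge n}}\}$ for all $n\in\mathbb{Z}$ and all $a\in\mathbb{Q}_p$. *)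

theory Defs
  imports Complex_Main "HOL-Computational_Algebra.Primes"
begin

text \<open>The field Q_p is modelled by p-adic digit expansions: an element is
  x = sum over i of (x i) * p^i with digits 0 <= x i < p, and only finitely many
  nonzero digits at negative indices.  This is a bijective model of Q_p.\<close>

definition Qp :: "nat \<Rightarrow> (int \<Rightarrow> nat) set" where
  "Qp p = {x. (\<forall>i. x i < p) \<and> (\<exists>N. \<forall>i<N. x i = 0)}"

fun padic_borrow :: "(int \<Rightarrow> nat) \<Rightarrow> (int \<Rightarrow> nat) \<Rightarrow> int \<Rightarrow> nat \<Rightarrow> int" where
  "padic_borrow x y N 0 = 0"
| "padic_borrow x y N (Suc k) =
     (if int (x (N + int k)) - int (y (N + int k)) - padic_borrow x y N k < 0 then 1 else 0)"

definition padic_sub :: "nat \<Rightarrow> (int \<Rightarrow> nat) \<Rightarrow> (int \<Rightarrow> nat) \<Rightarrow> (int \<Rightarrow> nat)" where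
  "padic_sub p x y =
     (let N = (SOME N. \<forall>i<N. x i = 0 \<and> y i = 0)
      in (\<lambda>i. if i < N then 0
               else nat ((int (x i) - int (y i) - padic_borrow x y N (nat (i - N))) mod int p)))"

definition padic_val :: "(int \<Rightarrow> nat) \<Rightarrow> int" where
  "padic_val z = (THE i. z i \<noteq> 0 \<and> (\<forall>j<i. z j = 0))"

definition padic_abs :: "nat \<Rightarrow> (int \<Rightarrow> nat) \<Rightarrow> real" where
  "padic_abs p z = (if z = (\<lambda>_. 0) then 0 else real p powr (- real_of_int (padic_val z)))"

text \<open>Embedding of nonnegative elements of Z[1/p] (base-p expansion).\<close>
definition padic_of_nonneg :: "nat \<Rightarrow> rat \<Rightarrow> (int \<Rightarrow> nat)" where
  "padic_of_nonneg p r = (\<lambda>i. nat (\<lfloor>r / (of_nat p) powi i\<rfloor> mod int p))"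

definition padic_orders :: "nat \<Rightarrow> (int \<Rightarrow> nat) set \<Rightarrow> int set" where
  "padic_orders p E = {padic_val (padic_sub p x y) | x y. x \<in> E \<and> y \<in> E \<and> x \<noteq> y}"

definition padic_ball :: "nat \<Rightarrow> (int \<Rightarrow> nat) \<Rightarrow> int \<Rightarrow> (int \<Rightarrow> nat) set" where
  "padic_ball p a n = {x \<in> Qp p. padic_abs p (padic_sub p x a) \<le> real p powr (- real_of_int n)}"

definition p_homogeneous :: "nat \<Rightarrow> (int \<Rightarrow> nat) set \<Rightarrow> bool" where
  "p_homogeneous p E \<longleftrightarrow>
     E \<subseteq> Qp p \<and> bdd_above (padic_orders p E) \<and>
     (\<forall>n::int. \<forall>a \<in> Qp p.
        finite (E \<inter> padic_ball p a n) \<and>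
        card (E \<inter> padic_ball p a n) \<in> {0, p ^ card {i \<in> padic_orders p E. i \<ge> n}})"

definition padic_hat :: "nat \<Rightarrow> (int \<Rightarrow> nat) set \<Rightarrow> (int \<Rightarrow> nat) set" where
  "padic_hat p E =
     {padic_of_nonneg p (\<Sum>i \<in> {i \<in> padic_orders p E. \<beta> i \<noteq> 0}. of_nat (\<beta> i) * (of_nat p) powi i)
      | \<beta>. (\<forall>i \<in> padic_orders p E. \<beta> i < p) \<and> finite {i \<in> padic_orders p E. \<beta> i \<noteq> 0}}"

definition padic_isometry :: "nat \<Rightarrow> ((int \<Rightarrow> nat) \<Rightarrow> (int \<Rightarrow> nat)) \<Rightarrow> bool" where
  "padic_isometry p f \<longleftrightarrow> f ` Qp p \<subseteq> Qp p \<and>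
     (\<forall>x \<in> Qp p. \<forall>y \<in> Qp p. padic_abs p (padic_sub p (f x) (f y)) = padic_abs p (padic_sub p x y))"

end

theory Submission
  imports Defs "HOL-Combinatorics.Transposition"
begin

text \<open>Points of \<open>\<rat>\<^sub>p\<close> are digit sequences, and \<open>|x - y|\<^sub>p = p\<^sup>-\<^sup>m\<close> where \<open>m\<close> is the first
  index at which the digits of \<open>x\<close> and \<open>y\<close> differ. Hence a map computing the \<open>i\<close>-th digit of
  the image from the digits up to \<open>i\<close>, injectively in the \<open>i\<close>-th digit, is an isometry.
  At a level \<open>i \<notin> I\<^sub>E\<close> all points of \<open>E\<close> with a common prefix below \<open>i\<close> share their
  \<open>i\<close>-th digit; swapping that forced digit with \<open>0\<close> gives such a map, which keeps the digits
  of points of \<open>E\<close> at the levels in \<open>I\<^sub>E\<close> and erases all others.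
  Conversely, at a level \<open>n \<in> I\<^sub>E\<close> homogeneity makes a ball of radius \<open>p\<^sup>-\<^sup>n\<close> around a point
  of \<open>E\<close> contain \<open>p\<^sup>k\<^sup>+\<^sup>1\<close> points of \<open>E\<close>, split among its \<open>p\<close> subballs of radius
  \<open>p\<^sup>-\<^sup>n\<^sup>-\<^sup>1\<close> with at most \<open>p\<^sup>k\<close> points each, so every digit occurs at level \<open>n\<close>.
  Hence the image of \<open>E\<close> consists of all digit sequences supported on \<open>I\<^sub>E\<close>, which are
  exactly the elements of \<open>padic_hat p E\<close>.\<close>

lemma Qp_digit_less: "x \<in> Qp p \<Longrightarrow> x i < p"
  by (simp add: Qp_def)

lemma Qp_zero_below:
  assumes "x \<in> Qp p" "y \<in> Qp p"
  obtains N where "\<forall>i<N. x i = 0 \<and> y i = 0"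
proof -
  obtain N1 N2 where "\<forall>i<N1. x i = 0" "\<forall>i<N2. y i = 0"
    using assms by (auto simp: Qp_def)
  then show thesis by (intro that[of "min N1 N2"]) auto
qed

lemma padic_borrow_eq_0:
  "(\<And>i. N \<le> i \<Longrightarrow> i < N + int k \<Longrightarrow> x i = y i) \<Longrightarrow> padic_borrow x y N k = 0"
  by (induction k) auto

lemma padic_sub_eq:
  assumes "x \<in> Qp p" "y \<in> Qp p"
  obtains N where "\<forall>i<N. x i = 0 \<and> y i = 0"
    and "padic_sub p x y = (\<lambda>i. if i < N then 0
           else nat ((int (x i) - int (y i) - padic_borrow x y N (nat (i - N))) mod int p))"
proof -
  define N where "N = (SOME N. \<forall>i<N. x i = 0 \<and> y i = 0)"
  have "\<forall>i<N. x i = 0 \<and> y i = 0"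
    unfolding N_def by (rule someI_ex) (meson Qp_zero_below assms)
  then show thesis by (rule that) (simp add: padic_sub_def Let_def flip: N_def)
qed

lemma padic_sub_agree_below:
  assumes x: "x \<in> Qp p" and y: "y \<in> Qp p" and agree: "\<forall>i<m. x i = y i"
  shows "\<forall>i<m. padic_sub p x y i = 0"
    and "x m \<noteq> y m \<Longrightarrow> padic_sub p x y m \<noteq> 0"
proof -
  obtain N where N: "\<forall>i<N. x i = 0 \<and> y i = 0" and sub: "padic_sub p x y = (\<lambda>i. if i < N then 0
           else nat ((int (x i) - int (y i) - padic_borrow x y N (nat (i - N))) mod int p))"
    using padic_sub_eq[OF x y] .
  have no_borrow: "padic_borrow x y N (nat (i - N)) = 0" if "i \<le> m" for i
    using agree that by (intro padic_borrow_eq_0) (auto split: if_splits)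
  show "\<forall>i<m. padic_sub p x y i = 0"
    using agree no_borrow by (simp add: sub)
  assume ne: "x m \<noteq> y m"
  then have "N \<le> m" using N not_less by metis
  have "\<bar>int (x m) - int (y m)\<bar> < int p" "int (x m) - int (y m) \<noteq> 0"
    using Qp_digit_less[OF x, of m] Qp_digit_less[OF y, of m] ne by auto
  then have "(int (x m) - int (y m)) mod int p \<noteq> 0"
    using dvd_imp_le_int[of "int (x m) - int (y m)" "int p"] by (auto simp: mod_eq_0_iff_dvd)
  moreover have "(int (x m) - int (y m)) mod int p \<ge> 0"
    using Qp_digit_less[OF x, of m] by (intro pos_mod_sign) simp
  ultimately show "padic_sub p x y m \<noteq> 0"
    using \<open>N \<le> m\<close> no_borrow[of m] by (simp add: sub)
qed

lemma padic_sub_self: "x \<in> Qp p \<Longrightarrow> padic_sub p x x = (\<lambda>_. 0)"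
proof
  fix i assume "x \<in> Qp p"
  from padic_sub_agree_below(1)[OF this this, of "i + 1"] show "padic_sub p x x i = 0" by simp
qed

lemma Qp_first_difference:
  assumes "x \<in> Qp p" "y \<in> Qp p" "x \<noteq> y"
  obtains m where "\<forall>i<m. x i = y i" "x m \<noteq> y m"
proof -
  obtain N where N: "\<forall>i<N. x i = 0 \<and> y i = 0" using Qp_zero_below[OF assms(1,2)] .
  obtain j where j: "x j \<noteq> y j" using assms(3) by blast
  define D where "D = {i. N \<le> i \<and> i \<le> j \<and> x i \<noteq> y i}"
  have "finite D" by (rule finite_subset[of _ "{N..j}"]) (auto simp: D_def)
  moreover have "j \<in> D" using N j by (auto simp: D_def) (metis not_less)
  ultimately have "Min D \<in> D" and Min_least: "\<And>i. i \<in> D \<Longrightarrow> Min D \<le> i"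
    by (auto intro: Min_in)
  have "x i = y i" if "i < Min D" for i
  proof (rule ccontr)
    assume "x i \<noteq> y i"
    moreover from this N have "N \<le> i" by (metis not_less)
    moreover have "Min D \<le> j" using \<open>Min D \<in> D\<close> by (simp add: D_def)
    ultimately have "i \<in> D" using that by (simp add: D_def)
    with Min_least that show False by fastforce
  qed
  moreover have "x (Min D) \<noteq> y (Min D)" using \<open>Min D \<in> D\<close> by (simp add: D_def)
  ultimately show thesis by (meson that)
qed

lemma padic_val_eqI:
  assumes "z m \<noteq> 0" "\<forall>i<m. z i = 0"
  shows "padic_val z = m"
  unfolding padic_val_def
proof (rule the_equality)
  fix i assume "z i \<noteq> 0 \<and> (\<forall>j<i. z j = 0)"
  with assms show "i = m" by (meson linorder_neqE)
qed (use assms in auto)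

lemma padic_val_sub:
  assumes "x \<in> Qp p" "y \<in> Qp p" "\<forall>i<m. x i = y i" "x m \<noteq> y m"
  shows "padic_val (padic_sub p x y) = m"
  using padic_sub_agree_below[OF assms(1-3)] assms(4) by (intro padic_val_eqI) auto

lemma padic_abs_sub:
  assumes "x \<in> Qp p" "y \<in> Qp p" "\<forall>i<m. x i = y i" "x m \<noteq> y m"
  shows "padic_abs p (padic_sub p x y) = real p powr - real_of_int m"
  using padic_val_sub[OF assms] padic_sub_agree_below(2)[OF assms(1-3) assms(4)]
  by (auto simp: padic_abs_def)

lemma padic_ball_eq:
  assumes "p > 1" and a: "a \<in> Qp p"
  shows "padic_ball p a n = {x \<in> Qp p. \<forall>i<n. x i = a i}"
proof -
  have "padic_abs p (padic_sub p x a) \<le> real p powr - real_of_int n \<longleftrightarrow> (\<forall>i<n. x i = a i)"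
    if x: "x \<in> Qp p" for x
  proof (cases "x = a")
    case True
    then show ?thesis using padic_sub_self[OF a] by (simp add: padic_abs_def)
  next
    case False
    then obtain m where m: "\<forall>i<m. x i = a i" "x m \<noteq> a m"
      using Qp_first_difference[OF x a] by blast
    then have "(\<forall>i<n. x i = a i) \<longleftrightarrow> n \<le> m" by (metis not_le order_less_le_trans)
    with padic_abs_sub[OF x a m] \<open>p > 1\<close> show ?thesis by simp
  qed
  then show ?thesis by (auto simp: padic_ball_def)
qed

lemma padic_isometryI:
  assumes into: "\<And>x. x \<in> Qp p \<Longrightarrow> f x \<in> Qp p"
    and causal: "\<And>x y i. \<forall>j\<le>i. x j = y j \<Longrightarrow> f x i = f y i"
    and digit_inj: "\<And>x y i. \<forall>j<i. x j = y j \<Longrightarrow> x i \<noteq> y i \<Longrightarrow> f x i \<noteq> f y i"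
  shows "padic_isometry p f"
  unfolding padic_isometry_def
proof (intro conjI ballI)
  show "f ` Qp p \<subseteq> Qp p" using into by blast
  fix x y assume x: "x \<in> Qp p" and y: "y \<in> Qp p"
  show "padic_abs p (padic_sub p (f x) (f y)) = padic_abs p (padic_sub p x y)"
  proof (cases "x = y")
    case True
    then show ?thesis using padic_sub_self[OF y] padic_sub_self[OF into[OF y]] by simp
  next
    case False
    then obtain m where m: "\<forall>i<m. x i = y i" "x m \<noteq> y m"
      using Qp_first_difference[OF x y] by blast
    have "\<forall>i<m. f x i = f y i" using m(1) by (auto intro: causal)
    moreover have "f x m \<noteq> f y m" using m by (rule digit_inj)
    ultimately show ?thesis
      using padic_abs_sub[OF x y m] padic_abs_sub[OF into[OF x] into[OF y]] by simp
  qed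
qed

lemma digit_sum_less_power:
  fixes b :: "int \<Rightarrow> nat"
  assumes "finite T" and digits: "\<forall>i. b i < p" and "\<forall>i\<in>T. i < k"
  shows "(\<Sum>i\<in>T. of_nat (b i) * (of_nat p :: 'a :: linordered_field) powi i) < of_nat p powi k"
  using assms(1,3)
proof (induction T arbitrary: k rule: finite_linorder_max_induct)
  case empty
  from digits[rule_format, of 0] show ?case by simp
next
  case (insert c T)
  have "p > 0" using digits by (metis gr_zeroI not_less0)
  have "(\<Sum>i\<in>insert c T. of_nat (b i) * (of_nat p :: 'a) powi i)
      = of_nat (b c) * of_nat p powi c + (\<Sum>i\<in>T. of_nat (b i) * of_nat p powi i)"
    using insert by (auto intro: sum.insert)
  also have "\<dots> < of_nat (b c) * of_nat p powi c + of_nat p powi c"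
    using insert by simp
  also have "\<dots> = of_nat (Suc (b c)) * of_nat p powi c"
    by (simp add: algebra_simps)
  also have "\<dots> \<le> of_nat p * of_nat p powi c"
    using digits[rule_format, of c] \<open>p > 0\<close>
    by (intro mult_right_mono) (simp_all only: of_nat_le_iff Suc_le_eq, simp)
  also have "\<dots> = of_nat p powi (c + 1)"
    using \<open>p > 0\<close> by (simp add: power_int_add)
  also have "\<dots> \<le> of_nat p powi k"
    using insert \<open>p > 0\<close> by (intro power_int_increasing) auto
  finally show ?case .
qed

lemma power_int_divide_less:
  fixes x :: "'a :: field"
  assumes "x \<noteq> 0" "k < i"
  shows "x powi i / x powi k = x * x ^ nat (i - k - 1)"
proof -
  have "x powi i / x powi k = x powi (i - k)"
    using \<open>x \<noteq> 0\<close> by (simp add: power_int_diff)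
  also have "i - k = int (Suc (nat (i - k - 1)))" using \<open>k < i\<close> by simp
  finally show ?thesis by (simp only: power_int_of_nat power_Suc)
qed

lemma padic_of_nonneg_digit_sum:
  fixes b :: "int \<Rightarrow> nat"
  assumes "p > 1" "finite S" and digits: "\<forall>i. b i < p" and supp: "\<forall>i. i \<notin> S \<longrightarrow> b i = 0"
  shows "padic_of_nonneg p (\<Sum>i\<in>S. of_nat (b i) * (of_nat p :: rat) powi i) = b"
proof
  fix k
  define w where "w i = of_nat (b i) * (of_nat p :: rat) powi i" for i
  define Lo where "Lo = {i \<in> S. i < k}"
  define Hi where "Hi = {i \<in> S. k < i}"
  define H where "H = (\<Sum>i\<in>Hi. int (b i) * int p ^ nat (i - k - 1))"
  \<comment> \<open>after division by \<open>p\<^sup>k\<close>, the digits below \<open>k\<close> give a fraction in \<open>[0, 1)\<close>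
     and those above \<open>k\<close> the multiple \<open>p H\<close> of \<open>p\<close>\<close>
  have fin: "finite Lo" "finite Hi" using \<open>finite S\<close> by (simp_all add: Lo_def Hi_def)
  have pk: "(of_nat p :: rat) powi k > 0" using \<open>p > 1\<close> by simp
  have "(\<Sum>i\<in>S. w i) = (\<Sum>i\<in>insert k (Lo \<union> Hi). w i)"
    using \<open>finite S\<close> supp by (intro sum.mono_neutral_cong) (auto simp: Lo_def Hi_def w_def)
  also have "\<dots> = w k + (\<Sum>i\<in>Lo. w i) + (\<Sum>i\<in>Hi. w i)"
    using fin by (simp add: Lo_def Hi_def, subst sum.union_disjoint) auto
  finally have split: "(\<Sum>i\<in>S. w i) = w k + (\<Sum>i\<in>Lo. w i) + (\<Sum>i\<in>Hi. w i)" .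
  have "w i / of_nat p powi k = of_nat p * of_int (int (b i) * int p ^ nat (i - k - 1))"
    if "i \<in> Hi" for i
    using power_int_divide_less[of "of_nat p :: rat" k i] that \<open>p > 1\<close>
    by (simp add: w_def Hi_def flip: times_divide_eq_right)
  then have high: "(\<Sum>i\<in>Hi. w i) / of_nat p powi k = of_nat p * of_int H"
    by (simp add: H_def sum_divide_distrib sum_distrib_left)
  have "0 \<le> (\<Sum>i\<in>Lo. w i) / of_nat p powi k"
    using pk by (intro divide_nonneg_pos sum_nonneg) (auto simp: w_def)
  moreover have "(\<Sum>i\<in>Lo. w i) / of_nat p powi k < 1"
    using digit_sum_less_power[OF fin(1) digits, of k] pk by (simp add: w_def Lo_def)
  moreover have "(\<Sum>i\<in>S. w i) / of_nat p powi k
      = (\<Sum>i\<in>Lo. w i) / of_nat p powi k + of_int (int (b k) + int p * H)"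
    unfolding split add_divide_distrib high using \<open>p > 1\<close> by (simp add: w_def)
  ultimately have "\<lfloor>(\<Sum>i\<in>S. w i) / of_nat p powi k\<rfloor> = int (b k) + int p * H"
    by (intro floor_unique) linarith+
  moreover have "(int (b k) + int p * H) mod int p = int (b k)"
    using digits by simp
  ultimately show "padic_of_nonneg p (\<Sum>i\<in>S. w i) k = b k"
    by (simp add: padic_of_nonneg_def)
qed

lemma finite_padic_orders_ge:
  assumes "bdd_above (padic_orders p E)"
  shows "finite {i \<in> padic_orders p E. n \<le> i}"
proof -
  obtain M where "\<forall>i\<in>padic_orders p E. i \<le> M" using assms by (auto simp: bdd_above_def)
  then have "{i \<in> padic_orders p E. n \<le> i} \<subseteq> {n..M}" by auto
  then show ?thesis by (rule finite_subset) simp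
qed

lemma padic_hat_subset:
  assumes "p > 1"
  shows "padic_hat p E \<subseteq> {y \<in> Qp p. \<forall>i. i \<notin> padic_orders p E \<longrightarrow> y i = 0}"
proof
  fix y assume "y \<in> padic_hat p E"
  then obtain \<beta> where y: "y = padic_of_nonneg p
      (\<Sum>i\<in>{i \<in> padic_orders p E. \<beta> i \<noteq> 0}. of_nat (\<beta> i) * of_nat p powi i)"
    and \<beta>: "\<forall>i\<in>padic_orders p E. \<beta> i < p" "finite {i \<in> padic_orders p E. \<beta> i \<noteq> 0}"
    using padic_hat_def by auto
  define S where "S = {i \<in> padic_orders p E. \<beta> i \<noteq> 0}"
  define b where "b i = (if i \<in> S then \<beta> i else 0)" for i
  have "finite S" using \<beta>(2) by (simp add: S_def)
  have "y = padic_of_nonneg p (\<Sum>i\<in>S. of_nat (b i) * of_nat p powi i)"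
    unfolding y S_def b_def by (rule arg_cong[where f = "padic_of_nonneg p"], rule sum.cong) auto
  also have "\<dots> = b"
    using \<open>p > 1\<close> \<beta> \<open>finite S\<close> by (intro padic_of_nonneg_digit_sum) (auto simp: S_def b_def)
  finally have "y = b" .
  obtain N where "\<forall>i\<in>S. N \<le> i"
    using bdd_below_finite[OF \<open>finite S\<close>] by (auto simp: bdd_below_def)
  then have "\<forall>i<N. b i = 0" by (auto simp: b_def)
  moreover have "\<forall>i. b i < p" using \<beta>(1) \<open>p > 1\<close> by (simp add: b_def S_def)
  ultimately have "b \<in> Qp p" unfolding Qp_def by blast
  moreover have "\<forall>i. i \<notin> padic_orders p E \<longrightarrow> b i = 0" by (simp add: b_def S_def)
  ultimately show "y \<in> {y \<in> Qp p. \<forall>i. i \<notin> padic_orders p E \<longrightarrow> y i = 0}"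
    using \<open>y = b\<close> by simp
qed

lemma padic_hat_superset:
  assumes "p > 1" and bdd: "bdd_above (padic_orders p E)"
  shows "{y \<in> Qp p. \<forall>i. i \<notin> padic_orders p E \<longrightarrow> y i = 0} \<subseteq> padic_hat p E"
proof
  fix y assume y: "y \<in> {y \<in> Qp p. \<forall>i. i \<notin> padic_orders p E \<longrightarrow> y i = 0}"
  define S where "S = {i \<in> padic_orders p E. y i \<noteq> 0}"
  obtain N where N: "\<forall>i<N. y i = 0" using y by (auto simp: Qp_def)
  have "S \<subseteq> {i \<in> padic_orders p E. N \<le> i}"
  proof
    fix i assume "i \<in> S"
    with N have "\<not> i < N" by (auto simp: S_def)
    with \<open>i \<in> S\<close> show "i \<in> {i \<in> padic_orders p E. N \<le> i}" by (simp add: S_def)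
  qed
  then have "finite S" using finite_padic_orders_ge[OF bdd] by (rule finite_subset)
  then have "y = padic_of_nonneg p (\<Sum>i\<in>S. of_nat (y i) * of_nat p powi i)"
    using \<open>p > 1\<close> y by (intro padic_of_nonneg_digit_sum[symmetric]) (auto simp: S_def Qp_def)
  moreover have "\<forall>i\<in>padic_orders p E. y i < p" using y by (simp add: Qp_def)
  ultimately show "y \<in> padic_hat p E"
    using \<open>finite S\<close> unfolding padic_hat_def S_def by (intro CollectI exI[of _ y] conjI) simp_all
qed

lemma padic_orders_digit_eq:
  assumes "E \<subseteq> Qp p" "x \<in> E" "y \<in> E" "\<forall>j<i. x j = y j" "i \<notin> padic_orders p E"
  shows "x i = y i"
proof (rule ccontr)
  assume "x i \<noteq> y i"
  with assms have "padic_val (padic_sub p x y) = i" "x \<noteq> y"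
    by (auto intro: padic_val_sub)
  with assms(2,3) have "i \<in> padic_orders p E"
    unfolding padic_orders_def by blast
  with assms(5) show False ..
qed

lemma p_homogeneous_cylinder:
  assumes "p_homogeneous p E" "p > 1" "a \<in> Qp p"
  shows "finite {x \<in> E. \<forall>i<n. x i = a i}"
    and "card {x \<in> E. \<forall>i<n. x i = a i} \<in> {0, p ^ card {i \<in> padic_orders p E. n \<le> i}}"
proof -
  have "E \<inter> padic_ball p a n = {x \<in> E. \<forall>i<n. x i = a i}"
    using assms by (auto simp: padic_ball_eq p_homogeneous_def)
  with assms show "finite {x \<in> E. \<forall>i<n. x i = a i}"
    and "card {x \<in> E. \<forall>i<n. x i = a i} \<in> {0, p ^ card {i \<in> padic_orders p E. n \<le> i}}"
    unfolding p_homogeneous_def by metis+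
qed

lemma p_homogeneous_cylinder_card_le:
  assumes hom: "p_homogeneous p E" and "p > 1"
  shows "finite {x \<in> E. \<forall>i<n. x i = a i}"
    and "card {x \<in> E. \<forall>i<n. x i = a i} \<le> p ^ card {i \<in> padic_orders p E. n \<le> i}"
proof -
  have "finite {x \<in> E. \<forall>i<n. x i = a i} \<and>
      card {x \<in> E. \<forall>i<n. x i = a i} \<le> p ^ card {i \<in> padic_orders p E. n \<le> i}"
  proof (cases "{x \<in> E. \<forall>i<n. x i = a i} = {}")
    case False
    then obtain x where x: "x \<in> E" "\<forall>i<n. x i = a i" by blast
    then have "x \<in> Qp p" using hom by (auto simp: p_homogeneous_def)
    moreover have "{y \<in> E. \<forall>i<n. y i = a i} = {y \<in> E. \<forall>i<n. y i = x i}" using x by auto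
    ultimately have "finite {y \<in> E. \<forall>i<n. y i = a i}"
      and "card {y \<in> E. \<forall>i<n. y i = a i} \<in> {0, p ^ card {i \<in> padic_orders p E. n \<le> i}}"
      using p_homogeneous_cylinder[OF hom \<open>p > 1\<close>, of x n] by simp_all
    moreover have "c \<le> q" if "c \<in> {0, q}" for c q :: nat
      using that by auto
    ultimately show ?thesis by blast
  next
    case True
    then show ?thesis by (simp only:) simp
  qed
  then show "finite {x \<in> E. \<forall>i<n. x i = a i}"
    and "card {x \<in> E. \<forall>i<n. x i = a i} \<le> p ^ card {i \<in> padic_orders p E. n \<le> i}"
    by blast+
qed

lemma p_homogeneous_branching:
  assumes hom: "p_homogeneous p E" and "p > 1"
    and n: "n \<in> padic_orders p E" and e: "e \<in> E" and "d < p"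
  shows "\<exists>e'\<in>E. (\<forall>j<n. e' j = e j) \<and> e' n = d"
proof (rule ccontr)
  assume no_child: "\<not> ?thesis"
  have EQ: "E \<subseteq> Qp p" and bdd: "bdd_above (padic_orders p E)"
    using hom by (simp_all add: p_homogeneous_def)
  define k where "k = card {i \<in> padic_orders p E. n + 1 \<le> i}"
  have "{i \<in> padic_orders p E. n \<le> i} = insert n {i \<in> padic_orders p E. n + 1 \<le> i}"
    using n by auto
  then have card_ge_n: "card {i \<in> padic_orders p E. n \<le> i} = Suc k"
    using finite_padic_orders_ge[OF bdd] by (simp add: k_def)
  define C where "C = {x \<in> E. \<forall>i<n. x i = e i}"
  define child where "child d' = {x \<in> E. \<forall>i<n + 1. x i = (e(n := d')) i}" for d'
  have "finite C" "card C \<in> {0, p ^ Suc k}" "C \<noteq> {}"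
    using p_homogeneous_cylinder[OF hom \<open>p > 1\<close>, of e n] e EQ card_ge_n by (auto simp: C_def)
  then have card_C: "card C = p ^ Suc k" by auto
  have child_card: "finite (child d')" "card (child d') \<le> p ^ k" for d'
    unfolding child_def k_def by (rule p_homogeneous_cylinder_card_le[OF hom \<open>p > 1\<close>])+
  have "C = (\<Union>d'\<in>{..<p}. child d')"
    using EQ Qp_digit_less by (auto simp: C_def child_def zless_add1_eq order_le_less)
  then have "card C = (\<Sum>d'\<in>{..<p}. card (child d'))"
    using child_card by (simp add: card_UN_disjoint child_def disjoint_iff)
  also have "\<dots> < (\<Sum>d'\<in>{..<p}. p ^ k)"
  proof (rule sum_strict_mono_ex1)
    show "\<forall>d'\<in>{..<p}. card (child d') \<le> p ^ k" using child_card by blast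
    have "child d = {}" using no_child by (auto simp: child_def zless_add1_eq order_le_less)
    then show "\<exists>d'\<in>{..<p}. card (child d') < p ^ k"
      using \<open>d < p\<close> \<open>p > 1\<close> by (intro bexI[of _ d]) auto
  qed simp
  also have "\<dots> = p ^ Suc k" by simp
  finally show False using card_C by simp
qed

lemma p_homogeneous_realizes_digits:
  assumes hom: "p_homogeneous p E" and "p > 1" "E \<noteq> {}" and y: "y \<in> Qp p"
  shows "\<exists>e\<in>E. \<forall>i\<in>padic_orders p E. e i = y i"
proof -
  have EQ: "E \<subseteq> Qp p" and "bdd_above (padic_orders p E)"
    using hom by (simp_all add: p_homogeneous_def)
  then obtain M where M: "\<forall>i\<in>padic_orders p E. i \<le> M"
    by (auto simp: bdd_above_def)
  obtain e0 where e0: "e0 \<in> E" using \<open>E \<noteq> {}\<close> by blast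
  then have "e0 \<in> Qp p" using EQ by blast
  then obtain L where L: "\<forall>i<L. e0 i = 0 \<and> y i = 0" using Qp_zero_below y by blast
  have "\<exists>e\<in>E. \<forall>i\<in>padic_orders p E. i < n \<longrightarrow> e i = y i" if "L \<le> n" for n
    using that
  proof (induction n rule: int_ge_induct)
    case base
    show ?case using e0 L by (intro bexI[of _ e0]) auto
  next
    case (step n)
    then obtain e where e: "e \<in> E" "\<forall>i\<in>padic_orders p E. i < n \<longrightarrow> e i = y i" by blast
    show ?case
    proof (cases "n \<in> padic_orders p E")
      case True
      then obtain e' where e': "e' \<in> E" "\<forall>j<n. e' j = e j" "e' n = y n"
        using p_homogeneous_branching[OF hom \<open>p > 1\<close> True e(1) Qp_digit_less[OF y]] by blast
      have "e' i = y i" if "i \<in> padic_orders p E" "i < n + 1" for i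
        using that e(2) e' by (cases "i < n") auto
      with e' show ?thesis by blast
    next
      case False
      have "e i = y i" if "i \<in> padic_orders p E" "i < n + 1" for i
        using that e(2) False by (cases "i < n") auto
      with e show ?thesis by blast
    qed
  qed
  moreover have "L \<le> max L (M + 1)" by simp
  ultimately obtain e where e: "e \<in> E" "\<forall>i\<in>padic_orders p E. i < max L (M + 1) \<longrightarrow> e i = y i"
    by blast
  have "e i = y i" if "i \<in> padic_orders p E" for i
    using e(2) M that by (meson max.strict_coboundedI2 zle_add1_eq_le not_le)
  with e(1) show ?thesis by blast
qed

text \<open>The \<open>i\<close>-th digit shared by the points of \<open>E\<close> extending the prefix of \<open>x\<close> below \<open>i\<close>
  (unique when \<open>i \<notin> I\<^sub>E\<close>, see \<open>padic_orders_digit_eq\<close>); it is \<open>0\<close> when no point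
  of \<open>E\<close> extends that prefix, so that the transposition below is then the identity.\<close>

definition forced_digit :: "(int \<Rightarrow> nat) set \<Rightarrow> (int \<Rightarrow> nat) \<Rightarrow> int \<Rightarrow> nat" where
  "forced_digit E x i =
     (if \<exists>e. e \<in> E \<and> (\<forall>j<i. e j = x j) then (SOME e. e \<in> E \<and> (\<forall>j<i. e j = x j)) i else 0)"

definition padic_collapse :: "nat \<Rightarrow> (int \<Rightarrow> nat) set \<Rightarrow> (int \<Rightarrow> nat) \<Rightarrow> int \<Rightarrow> nat" where
  "padic_collapse p E x i =
     (if i \<in> padic_orders p E then x i else transpose (forced_digit E x i) 0 (x i))"

lemma forced_digit_cong:
  assumes "\<forall>j<i. x j = y j"
  shows "forced_digit E x i = forced_digit E y i"
proof -
  have "(\<forall>j<i. e j = x j) \<longleftrightarrow> (\<forall>j<i. e j = y j)" for e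
    using assms by auto
  then show ?thesis unfolding forced_digit_def by (simp only:)
qed

lemma forced_digit_eq:
  assumes "E \<subseteq> Qp p" "e \<in> E" "\<forall>j<i. e j = x j" "i \<notin> padic_orders p E"
  shows "forced_digit E x i = e i"
proof -
  have "\<exists>e. e \<in> E \<and> (\<forall>j<i. e j = x j)" using assms by blast
  then have "(SOME e. e \<in> E \<and> (\<forall>j<i. e j = x j)) \<in> E \<and>
      (\<forall>j<i. (SOME e. e \<in> E \<and> (\<forall>j<i. e j = x j)) j = x j)"
    by (rule someI_ex)
  with assms have "(SOME e. e \<in> E \<and> (\<forall>j<i. e j = x j)) i = e i"
    by (intro padic_orders_digit_eq[of E p]) auto
  with assms show ?thesis by (auto simp: forced_digit_def)
qed

lemma forced_digit_less:
  assumes "E \<subseteq> Qp p" "p > 0"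
  shows "forced_digit E x i < p"
proof (cases "\<exists>e. e \<in> E \<and> (\<forall>j<i. e j = x j)")
  case True
  then have "(SOME e. e \<in> E \<and> (\<forall>j<i. e j = x j)) \<in> E" by (rule someI2_ex) blast
  with True assms show ?thesis by (auto simp: forced_digit_def Qp_def)
next
  case False
  then have "forced_digit E x i = 0" by (simp only: forced_digit_def if_False)
  with assms show ?thesis by simp
qed

lemma padic_collapse_on:
  assumes "E \<subseteq> Qp p" "e \<in> E"
  shows "padic_collapse p E e i = (if i \<in> padic_orders p E then e i else 0)"
  using forced_digit_eq[OF assms] by (simp add: padic_collapse_def)

lemma padic_collapse_Qp:
  assumes EQ: "E \<subseteq> Qp p" and "E \<noteq> {}" and x: "x \<in> Qp p"
  shows "padic_collapse p E x \<in> Qp p"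
proof -
  obtain e0 where e0: "e0 \<in> E" using \<open>E \<noteq> {}\<close> by blast
  then obtain N where N: "\<forall>i<N. e0 i = 0 \<and> x i = 0" using Qp_zero_below EQ x by blast
  have "p > 0" using Qp_digit_less[OF x] by (metis gr_zeroI not_less_zero)
  have "padic_collapse p E x i < p" for i
    using Qp_digit_less[OF x, of i] forced_digit_less[OF EQ \<open>p > 0\<close>, of x i] \<open>p > 0\<close>
    by (auto simp: padic_collapse_def transpose_def)
  moreover have "padic_collapse p E x i = 0" if "i < N" for i
    using forced_digit_eq[OF EQ e0, of i x] N that by (auto simp: padic_collapse_def)
  ultimately show ?thesis by (auto simp: Qp_def)
qed

lemma padic_isometry_collapse:
  assumes "E \<subseteq> Qp p" "E \<noteq> {}"
  shows "padic_isometry p (padic_collapse p E)"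
proof (rule padic_isometryI)
  show "padic_collapse p E x \<in> Qp p" if "x \<in> Qp p" for x
    using padic_collapse_Qp[OF assms that] .
  show "padic_collapse p E x i = padic_collapse p E y i" if "\<forall>j\<le>i. x j = y j" for x y i
    using that forced_digit_cong[of i x y E] by (simp add: padic_collapse_def)
  show "padic_collapse p E x i \<noteq> padic_collapse p E y i"
    if "\<forall>j<i. x j = y j" "x i \<noteq> y i" for x y i
    using that forced_digit_cong[of i x y E] by (auto simp: padic_collapse_def dest: transpose_eq_imp_eq)
qed

lemma padic_collapse_image:
  assumes hom: "p_homogeneous p E" and "p > 1" "E \<noteq> {}"
  shows "padic_collapse p E ` E = {y \<in> Qp p. \<forall>i. i \<notin> padic_orders p E \<longrightarrow> y i = 0}"
proof -
  have EQ: "E \<subseteq> Qp p" using hom by (simp add: p_homogeneous_def)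
  have "padic_collapse p E e \<in> Qp p" if "e \<in> E" for e
    using padic_collapse_Qp[OF EQ \<open>E \<noteq> {}\<close>] that EQ by blast
  moreover have "y \<in> padic_collapse p E ` E"
    if "y \<in> Qp p" "\<forall>i. i \<notin> padic_orders p E \<longrightarrow> y i = 0" for y
  proof -
    obtain e where e: "e \<in> E" "\<forall>i\<in>padic_orders p E. e i = y i"
      using p_homogeneous_realizes_digits[OF hom \<open>p > 1\<close> \<open>E \<noteq> {}\<close> \<open>y \<in> Qp p\<close>] by blast
    then have "padic_collapse p E e = y"
      using that padic_collapse_on[OF EQ e(1)] by auto
    with e(1) show ?thesis by blast
  qed
  ultimately show ?thesis using padic_collapse_on[OF EQ] by auto
qed

theorem lemma2p14:
  fixes p :: nat and E :: "(int \<Rightarrow> nat) set"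
  assumes "prime p"
    and "E \<noteq> {}"
    and "p_homogeneous p E"
  shows "\<exists>f. padic_isometry p f \<and> f ` E = padic_hat p E"
proof -
  have "p > 1" using \<open>prime p\<close> by (rule prime_gt_1_nat)
  have "E \<subseteq> Qp p" and "bdd_above (padic_orders p E)"
    using \<open>p_homogeneous p E\<close> by (simp_all add: p_homogeneous_def)
  have "padic_isometry p (padic_collapse p E)"
    using \<open>E \<subseteq> Qp p\<close> \<open>E \<noteq> {}\<close> by (rule padic_isometry_collapse)
  moreover have "padic_hat p E = {y \<in> Qp p. \<forall>i. i \<notin> padic_orders p E \<longrightarrow> y i = 0}"
    using padic_hat_subset[OF \<open>p > 1\<close>]
      padic_hat_superset[OF \<open>p > 1\<close> \<open>bdd_above (padic_orders p E)\<close>] by (rule equalityI)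
  moreover have "padic_collapse p E ` E = {y \<in> Qp p. \<forall>i. i \<notin> padic_orders p E \<longrightarrow> y i = 0}"
    using \<open>p_homogeneous p E\<close> \<open>p > 1\<close> \<open>E \<noteq> {}\<close> by (rule padic_collapse_image)
  ultimately show ?thesis by blast
qed

end
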